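(* Let $G\in T_{n,m}$ be a two-terminal graph such that the edge $st$ is not in $G$, let $e$ be any edge of $G$, and let $d$ be any positive integer. Then the two-terminal graph $G-e+st$ is $d$-stronger than $G$.
   Context: All graphs are finite, simple and undirected. A two-terminal graph is a graph $G$ together with two distinguished vertices $s,t$ (the terminals). $T_{n,m}$ denotes the set of all pairwise nonisomorphic (with isomorphisms preserving the set of terminals) two-terminal graphs with $n$ vertices and $m$ edges. For a positive integer $d$, a $d$-pathset of a two-terminal graph $G$ is a spanning subgraph of $G$ containing a path of length (number of edges) at most $d$ joining $s$ and $t$; $N_i^d(G)$ is the number of $d$-pathsets of $G$ with exactly $i$ edges. For $G,H\in T_{n,m}$, $G$ is $d$-stronger than $H$ if $N_i^d(G)\geq N_i^d(H)$ for every $i\in\{1,\ldots,m\}$ and $N_j^d(G)>N_j^d(H)$ for some $j\in\{1,\ldots,m\}$. $G-e+st$ denotes the graph obtained from $G$ by deleting edge $e$ and adding the edge $st$. *)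

theory Defs
  imports Main
begin

definition simple_graph :: "'a set \<Rightarrow> 'a set set \<Rightarrow> bool" where
  "simple_graph V E \<longleftrightarrow> finite V \<and> (\<forall>e\<in>E. \<exists>u v. e = {u, v} \<and> u \<in> V \<and> v \<in> V \<and> u \<noteq> v)"

definition two_terminal_graph :: "'a set \<Rightarrow> 'a set set \<Rightarrow> 'a \<Rightarrow> 'a \<Rightarrow> bool" where
  "two_terminal_graph V E s t \<longleftrightarrow> simple_graph V E \<and> s \<in> V \<and> t \<in> V \<and> s \<noteq> t"

definition is_path :: "'a set set \<Rightarrow> 'a list \<Rightarrow> bool" where
  "is_path F p \<longleftrightarrow> p \<noteq> [] \<and> distinct p \<and> (\<forall>i. Suc i < length p \<longrightarrow> {p ! i, p ! Suc i} \<in> F)"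

text \<open>F (a spanning subgraph, given by its edge set) contains an s-t path of length at most d.\<close>
definition has_short_st_path :: "'a set set \<Rightarrow> 'a \<Rightarrow> 'a \<Rightarrow> nat \<Rightarrow> bool" where
  "has_short_st_path F s t d \<longleftrightarrow>
     (\<exists>p. is_path F p \<and> hd p = s \<and> last p = t \<and> length p - 1 \<le> d)"

definition N :: "nat \<Rightarrow> nat \<Rightarrow> 'a set set \<Rightarrow> 'a \<Rightarrow> 'a \<Rightarrow> nat" where
  "N d i E s t = card {F. F \<subseteq> E \<and> card F = i \<and> has_short_st_path F s t d}"

definition d_stronger :: "nat \<Rightarrow> 'a set set \<Rightarrow> 'a set set \<Rightarrow> 'a \<Rightarrow> 'a \<Rightarrow> bool" where
  "d_stronger d E' E s t \<longleftrightarrow>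
     (\<forall>i\<in>{1..card E}. N d i E' s t \<ge> N d i E s t) \<and>
     (\<exists>j\<in>{1..card E}. N d j E' s t > N d j E s t)"

end

theory Submission
  imports Defs
begin

text \<open>Replacing an edge e of a d-pathset F by st yields a d-pathset of G-e+st with as many edges,
  since st alone is an s-t path of length 1; on sets avoiding st this replacement is injective.
  So N_i^d can only grow. For i = 1 it grows strictly: the only one-edge d-pathset is {st}.\<close>

definition replace_edge :: "'a \<Rightarrow> 'a \<Rightarrow> 'a set \<Rightarrow> 'a set" where
  "replace_edge e f F = (if e \<in> F then insert f (F - {e}) else F)"

lemma inj_on_replace_edge: "inj_on (replace_edge e f) {F. f \<notin> F}"
proof (rule inj_onI)
  fix F G assume "F \<in> {F. f \<notin> F}" "G \<in> {F. f \<notin> F}" and eq: "replace_edge e f F = replace_edge e f G"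
  then have "f \<notin> F" "f \<notin> G" by auto
  with eq show "F = G"
    unfolding replace_edge_def by (auto split: if_splits)
qed

lemma card_replace_edge:
  assumes "finite F" "f \<notin> F"
  shows "card (replace_edge e f F) = card F"
  using assms card.remove[of F e] by (simp add: replace_edge_def)

lemma replace_edge_subset: "F \<subseteq> E \<Longrightarrow> replace_edge e f F \<subseteq> E - {e} \<union> {f}"
  unfolding replace_edge_def by auto

lemma simple_graph_finite_edges:
  assumes "simple_graph V E"
  shows "finite E"
proof (rule finite_subset)
  show "E \<subseteq> Pow V" using assms unfolding simple_graph_def by fastforce
  show "finite (Pow V)" using assms unfolding simple_graph_def by simp
qed

lemma two_terminal_graph_replace_edge_st:
  assumes "two_terminal_graph V E s t"
  shows "two_terminal_graph V (E - {e} \<union> {{s, t}}) s t"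
  using assms unfolding two_terminal_graph_def simple_graph_def by blast

lemma has_short_st_path_st_edge:
  assumes "{s, t} \<in> F" "s \<noteq> t" "1 \<le> d"
  shows "has_short_st_path F s t d"
  unfolding has_short_st_path_def
proof (intro exI conjI)
  show "is_path F [s, t]" using assms by (auto simp: is_path_def less_Suc_eq)
qed (use assms in auto)

lemma has_short_st_path_singleton:
  assumes "has_short_st_path {f} s t d" "s \<noteq> t"
  shows "f = {s, t}"
proof -
  obtain p where p: "is_path {f} p" "hd p = s" "last p = t"
    using assms(1) unfolding has_short_st_path_def by blast
  have "p \<noteq> []" and dist: "distinct p" and edge: "\<And>i. Suc i < length p \<Longrightarrow> {p ! i, p ! Suc i} = f"
    using p(1) unfolding is_path_def by auto
  then have "length p \<noteq> 1"
    using p assms(2) by (metis One_nat_def hd_conv_nth last_conv_nth diff_Suc_1)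
  moreover have "length p > 0" using \<open>p \<noteq> []\<close> by simp
  ultimately have "length p \<ge> 2" by linarith
  have p0: "p ! 0 = s" using p(2) \<open>p \<noteq> []\<close> by (simp add: hd_conv_nth)
  have f: "f = {s, p ! 1}" using edge[of 0] \<open>length p \<ge> 2\<close> p0 by simp
  show ?thesis
  proof (cases "length p = 2")
    case True
    then have "p ! 1 = t" using p(3) \<open>p \<noteq> []\<close> by (simp add: last_conv_nth)
    then show ?thesis using f by simp
  next
    case False
    \<comment> \<open>a second edge {p!1, p!2} = f would force p!2 to repeat p!0 or p!1\<close>
    then have "length p \<ge> 3" using \<open>length p \<ge> 2\<close> by simp
    then have "{p ! 1, p ! 2} = f" using edge[of 1] by (simp add: numeral_2_eq_2)
    moreover have "p ! 2 \<noteq> p ! 0" "p ! 2 \<noteq> p ! 1"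
      using nth_eq_iff_index_eq[OF dist, of 2 0] nth_eq_iff_index_eq[OF dist, of 2 1]
        \<open>length p \<ge> 3\<close> \<open>p \<noteq> []\<close> by simp_all
    ultimately show ?thesis using f p0 by (auto simp: doubleton_eq_iff)
  qed
qed

lemma N_one:
  assumes "s \<noteq> t" "1 \<le> d"
  shows "N d 1 E s t = (if {s, t} \<in> E then 1 else 0)"
proof -
  have "{F. F \<subseteq> E \<and> card F = 1 \<and> has_short_st_path F s t d} = {F. F = {{s, t}} \<and> {s, t} \<in> E}"
  proof (intro set_eqI iffI)
    fix F assume "F \<in> {F. F \<subseteq> E \<and> card F = 1 \<and> has_short_st_path F s t d}"
    then have "F \<subseteq> E" "card F = 1" "has_short_st_path F s t d" by auto
    then obtain f where "F = {f}" "f \<in> E" "has_short_st_path {f} s t d"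
      by (metis card_1_singletonE insert_subset)
    with has_short_st_path_singleton[OF _ assms(1)] show "F \<in> {F. F = {{s, t}} \<and> {s, t} \<in> E}"
      by simp
  qed (use assms in \<open>auto intro: has_short_st_path_st_edge\<close>)
  then show ?thesis unfolding N_def by simp
qed

lemma has_short_st_path_replace_edge_st:
  assumes "has_short_st_path F s t d" "s \<noteq> t" "1 \<le> d"
  shows "has_short_st_path (replace_edge e {s, t} F) s t d"
  using assms unfolding replace_edge_def by (auto intro: has_short_st_path_st_edge)

lemma N_le_N_replace_edge_st:
  assumes "finite E" "{s, t} \<notin> E" "s \<noteq> t" "1 \<le> d"
  shows "N d i E s t \<le> N d i (E - {e} \<union> {{s, t}}) s t"
  unfolding N_def
proof (rule card_inj_on_le[of "replace_edge e {s, t}"])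
  show "inj_on (replace_edge e {s, t}) {F. F \<subseteq> E \<and> card F = i \<and> has_short_st_path F s t d}"
    using assms(2) by (auto intro: inj_on_subset[OF inj_on_replace_edge])
  show "replace_edge e {s, t} ` {F. F \<subseteq> E \<and> card F = i \<and> has_short_st_path F s t d}
        \<subseteq> {F. F \<subseteq> E - {e} \<union> {{s, t}} \<and> card F = i \<and> has_short_st_path F s t d}"
  proof (intro image_subsetI CollectI conjI)
    fix F assume F: "F \<in> {F. F \<subseteq> E \<and> card F = i \<and> has_short_st_path F s t d}"
    then have "finite F" "{s, t} \<notin> F" using assms(1,2) finite_subset by auto
    with F show "card (replace_edge e {s, t} F) = i" by (simp add: card_replace_edge)
    show "replace_edge e {s, t} F \<subseteq> E - {e} \<union> {{s, t}}"
      by (rule replace_edge_subset) (use F in simp)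
    show "has_short_st_path (replace_edge e {s, t} F) s t d"
      using F assms(3,4) by (simp add: has_short_st_path_replace_edge_st)
  qed
  show "finite {F. F \<subseteq> E - {e} \<union> {{s, t}} \<and> card F = i \<and> has_short_st_path F s t d}"
    using assms(1) by simp
qed

theorem lemma5:
  fixes V :: "'a set" and E :: "'a set set" and s t :: 'a and e :: "'a set" and d :: nat
  assumes "two_terminal_graph V E s t"
    and "{s, t} \<notin> E"
    and "e \<in> E"
    and "d \<ge> 1"
  shows "two_terminal_graph V (E - {e} \<union> {{s, t}}) s t
         \<and> card (E - {e} \<union> {{s, t}}) = card E
         \<and> d_stronger d (E - {e} \<union> {{s, t}}) E s t"
proof -
  have "finite E" and "s \<noteq> t"
    using assms(1) simple_graph_finite_edges unfolding two_terminal_graph_def by auto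
  have card_eq: "card (E - {e} \<union> {{s, t}}) = card E"
    using card_replace_edge[OF \<open>finite E\<close> assms(2), of e] assms(3) by (simp add: replace_edge_def)
  have "1 \<in> {1..card E}"
    using \<open>finite E\<close> assms(3) by (auto simp: Suc_le_eq card_gt_0_iff)
  moreover have "N d 1 E s t < N d 1 (E - {e} \<union> {{s, t}}) s t"
    using N_one[OF \<open>s \<noteq> t\<close> assms(4)] assms(2) by simp
  ultimately have "d_stronger d (E - {e} \<union> {{s, t}}) E s t"
    unfolding d_stronger_def
    using N_le_N_replace_edge_st[OF \<open>finite E\<close> assms(2) \<open>s \<noteq> t\<close> assms(4)] by auto
  with two_terminal_graph_replace_edge_st[OF assms(1)] card_eq show ?thesis by simp
qed

end
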